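(* Let $H \geq 1$ be a real number, let $m = p/q$ be a rational number with $p, q$ integers and $q > 0$, and let $c_1, c_2, c_3$ be integers with $c_1 \neq 0$, $c_3 \geq 0$ and $(c_1, c_2) = 1$. Suppose that there are at least three integer points $(x,y) \in \mathbb{Z}^2$ with $|x| \leq H$, $|y| \leq H$ lying on the circle \[ (c_1 X - c_2)^2 + (c_1 Y - m c_2)^2 = c_3 . \] Then \[ |c_1| \leq 4q(1+|m|)H, \qquad |c_2| \leq 2qH^2, \qquad c_3 \leq 36 q^2 (1+|m|)^2 H^4 . \]
   Context: For integers $a, b$, the notation $(a,b) = 1$ means: either one of $a, b$ equals $1$ and the other equals $0$, or $a$ and $b$ are both nonzero and coprime. *)

theory Defs
  imports Complex_Main
begin

text \<open>The paper's convention: (a,b) = 1 means either one of a, b is 1 and the other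
is 0, or a and b are both nonzero and coprime.\<close>
definition coprime_pair :: "int \<Rightarrow> int \<Rightarrow> bool" where
  "coprime_pair a b \<longleftrightarrow>
     ((a = 1 \<and> b = 0) \<or> (a = 0 \<and> b = 1) \<or> (a \<noteq> 0 \<and> b \<noteq> 0 \<and> coprime a b))"

end

theory Submission
  imports Defs
begin

text \<open>
  Clearing the denominator q of m = p/q, an integer point (x,y) lies on the
  circle iff  (q c1 x - q c2)^2 + (q c1 y - p c2)^2 = q^2 c3.  Subtracting this equation
  for two points P1, P2 gives the chord relation  q c1 N = 2 c2 K,  where
  N = |P1|^2 - |P2|^2  and  K = q (x1 - x2) + p (y1 - y2).  If K is nonzero, coprimality
  of c1 and c2 yields a nonzero integer e with  2K = c1 e  and  q N = c2 e,  hence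
  |c1| <= 2|K|,  |c2| <= q|N|,  and eliminating the centre gives  e^2 c3 = D W  with
  D = |P1 - P2|^2 and an explicit W, so c3 <= D W.  Elementary estimates of K, N and D W
  for points in the box [-H,H]^2 give the three claimed bounds.  Finally, among three
  distinct points of the circle some chord has K nonzero: otherwise all three points
  would lie on one line and, by the chord relation, at one distance from the origin.
\<close>

lemma chord_product_bound:
  fixes a1 a2 b1 b2 H :: real
  assumes "\<bar>a1\<bar> \<le> H" "\<bar>a2\<bar> \<le> H" "\<bar>b1\<bar> \<le> H" "\<bar>b2\<bar> \<le> H"
  shows "((a1 - a2)^2 + (b1 - b2)^2) * ((b1 + b2)^2 + (a1 - a2)^2) \<le> 33 * H^4"
proof -
  have H0: "0 \<le> H" using assms by linarith
  have sq: "t^2 \<le> H^2" if "\<bar>t\<bar> \<le> H" for t :: real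
    using that H0 by (simp add: power2_le_iff_abs_le)
  have "\<bar>a1 - a2\<bar> \<le> \<bar>2 * H\<bar>" using assms(1,2) H0 by linarith
  hence "(a1 - a2)^2 \<le> (2 * H)^2" by (rule power2_mono)
  hence diff_a: "(a1 - a2)^2 \<le> 4 * H^2" by (simp add: power_mult_distrib)
  have sum_b: "(b1 - b2)^2 + (b1 + b2)^2 \<le> 4 * H^2"
  proof -
    have "(b1 - b2)^2 + (b1 + b2)^2 = 2 * b1^2 + 2 * b2^2"
      by (simp add: power2_eq_square algebra_simps)
    thus ?thesis using sq[OF assms(3)] sq[OF assms(4)] by linarith
  qed
  have prod_b: "(b1 - b2)^2 * (b1 + b2)^2 \<le> H^4"
  proof -
    have "\<bar>b1^2 - b2^2\<bar> \<le> H^2"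
      using sq[OF assms(3)] sq[OF assms(4)] zero_le_power2[of b1] zero_le_power2[of b2]
      by linarith
    hence "(b1^2 - b2^2)^2 \<le> (H^2)^2" by (intro power2_mono) simp
    moreover have "(b1 - b2)^2 * (b1 + b2)^2 = (b1^2 - b2^2)^2"
      by (simp add: power2_eq_square algebra_simps)
    ultimately show ?thesis by (simp add: power_mult[symmetric])
  qed
  have expand: "((a1 - a2)^2 + (b1 - b2)^2) * ((b1 + b2)^2 + (a1 - a2)^2)
      = ((a1 - a2)^2)^2 + (a1 - a2)^2 * ((b1 - b2)^2 + (b1 + b2)^2) + (b1 - b2)^2 * (b1 + b2)^2"
    by (simp add: algebra_simps power2_eq_square)
  have "((a1 - a2)^2)^2 \<le> (4 * H^2)^2" using diff_a by (intro power_mono) auto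
  moreover have "(a1 - a2)^2 * ((b1 - b2)^2 + (b1 + b2)^2) \<le> (4 * H^2) * (4 * H^2)"
    using diff_a sum_b by (intro mult_mono) auto
  ultimately show ?thesis using expand prod_b by (simp add: power2_eq_square power4_eq_xxxx)
qed

text \<open>The quantity that bounds c3 (after dividing by q^2): the chord length squared
  times the squared length of (y1 + y2, x1 - x2) + m (-(x1 + x2), y1 - y2).  The cross
  term is controlled by  2|uv| <= u^2 + v^2, the two pure terms by the previous lemma.\<close>
lemma chord_weighted_bound:
  fixes x1 y1 x2 y2 H m :: real
  assumes "\<bar>x1\<bar> \<le> H" "\<bar>x2\<bar> \<le> H" "\<bar>y1\<bar> \<le> H" "\<bar>y2\<bar> \<le> H"
  shows "((x1 - x2)^2 + (y1 - y2)^2) *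
           (((y1 + y2) - m * (x1 + x2))^2 + ((x1 - x2) + m * (y1 - y2))^2)
         \<le> 36 * (1 + \<bar>m\<bar>)^2 * H^4"
proof -
  define D where "D = (x1 - x2)^2 + (y1 - y2)^2"
  define B where "B = (y1 + y2)^2 + (x1 - x2)^2"
  define C where "C = (x1 + x2)^2 + (y1 - y2)^2"
  define X where "X = 2 * (x1 - x2) * (y1 - y2) - 2 * (x1 + x2) * (y1 + y2)"
  have DB: "D * B \<le> 33 * H^4"
    unfolding D_def B_def using chord_product_bound[OF assms] .
  have DC: "D * C \<le> 33 * H^4"
    unfolding D_def C_def using chord_product_bound[OF assms(3,4,1,2)] by (simp add: add.commute)
  have "D \<ge> 0" unfolding D_def by simp
  have expand: "((y1 + y2) - m * (x1 + x2))^2 + ((x1 - x2) + m * (y1 - y2))^2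
      = B + m * X + m^2 * C"
    unfolding B_def C_def X_def by (simp add: power2_eq_square algebra_simps)
  have "\<bar>X\<bar> \<le> \<bar>2 * (x1 - x2) * (y1 - y2)\<bar> + \<bar>2 * (x1 + x2) * (y1 + y2)\<bar>"
    unfolding X_def by (rule abs_triangle_ineq4)
  also have "\<dots> = 2 * \<bar>x1 - x2\<bar> * \<bar>y1 - y2\<bar> + 2 * \<bar>x1 + x2\<bar> * \<bar>y1 + y2\<bar>"
    by (simp only: abs_mult abs_numeral)
  finally have "\<bar>X\<bar> \<le> 2 * \<bar>x1 - x2\<bar> * \<bar>y1 - y2\<bar> + 2 * \<bar>x1 + x2\<bar> * \<bar>y1 + y2\<bar>" .
  hence "\<bar>X\<bar> \<le> B + C"
    using sum_squares_bound[of "\<bar>x1 - x2\<bar>" "\<bar>y1 - y2\<bar>"]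
      sum_squares_bound[of "\<bar>x1 + x2\<bar>" "\<bar>y1 + y2\<bar>"]
    unfolding B_def C_def by simp
  hence "\<bar>m\<bar> * \<bar>X\<bar> \<le> \<bar>m\<bar> * (B + C)" by (rule mult_left_mono) simp
  hence "m * X \<le> \<bar>m\<bar> * (B + C)" by (metis abs_ge_self abs_mult order_trans)
  hence "D * (m * X) \<le> D * (\<bar>m\<bar> * (B + C))" using \<open>D \<ge> 0\<close> by (rule mult_left_mono)
  hence "D * (B + m * X + m^2 * C) \<le> D * B + \<bar>m\<bar> * (D * B + D * C) + m^2 * (D * C)"
    by (simp add: algebra_simps)
  also have "\<dots> \<le> 33 * H^4 + \<bar>m\<bar> * (33 * H^4 + 33 * H^4) + m^2 * (33 * H^4)"
    using DB DC by (intro add_mono mult_left_mono) auto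
  also have "\<dots> = 33 * (1 + \<bar>m\<bar>)^2 * H^4" by (simp add: power2_eq_square algebra_simps)
  also have "\<dots> \<le> 36 * (1 + \<bar>m\<bar>)^2 * H^4" by (intro mult_right_mono) auto
  finally show ?thesis unfolding D_def expand .
qed

subsection \<open>Integer arithmetic of chords\<close>

lemma circle_equation_int:
  fixes q p c1 c2 c3 x y :: int and m :: real
  assumes "q > 0" and "m = of_int p / of_int q"
    and "(of_int c1 * real_of_int x - of_int c2)\<^sup>2 + (of_int c1 * real_of_int y - m * of_int c2)\<^sup>2
           = real_of_int c3"
  shows "(q * c1 * x - q * c2)^2 + (q * c1 * y - p * c2)^2 = q^2 * c3"
proof -
  have qm: "of_int q * m = of_int p" using assms(1,2) by simp
  have "real_of_int ((q * c1 * x - q * c2)^2 + (q * c1 * y - p * c2)^2)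
      = (of_int q)^2 * ((of_int c1 * real_of_int x - of_int c2)\<^sup>2
                        + (of_int c1 * real_of_int y - m * of_int c2)\<^sup>2)"
    by (simp add: qm[symmetric] power2_eq_square algebra_simps)
  also have "\<dots> = real_of_int (q^2 * c3)" using assms(3) by simp
  finally show ?thesis by (simp only: of_int_eq_iff)
qed

text \<open>Subtracting the circle equations of two points eliminates c3 and leaves a linear
  relation between c1 and c2: the chord relation  q c1 N = 2 c2 K.\<close>
lemma chord_relation:
  fixes x1 y1 x2 y2 q p c1 c2 c3 :: int
  assumes "q \<noteq> 0" and "c1 \<noteq> 0"
    and "(q * c1 * x1 - q * c2)^2 + (q * c1 * y1 - p * c2)^2 = q^2 * c3"
    and "(q * c1 * x2 - q * c2)^2 + (q * c1 * y2 - p * c2)^2 = q^2 * c3"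
  shows "q * c1 * (x1^2 + y1^2 - x2^2 - y2^2) = 2 * c2 * (q * (x1 - x2) + p * (y1 - y2))"
proof -
  have "q * c1 * (q * c1 * (x1^2 + y1^2 - x2^2 - y2^2) - 2 * c2 * (q * (x1 - x2) + p * (y1 - y2))) = 0"
    using assms(3,4) by algebra
  thus ?thesis using assms(1,2) by simp
qed

lemma chord_cofactor:
  fixes c1 c2 q N K :: int
  assumes "c1 \<noteq> 0" and "coprime c1 c2" and "q * c1 * N = 2 * c2 * K" and "K \<noteq> 0"
  obtains e where "e \<noteq> 0" and "2 * K = c1 * e" and "q * N = c2 * e"
proof -
  have "c1 dvd c2 * (2 * K)"
    using assms(3) by (metis dvd_triv_left mult.assoc mult.commute)
  hence "c1 dvd 2 * K" using assms(2) by (simp add: coprime_dvd_mult_right_iff)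
  then obtain e where e: "2 * K = c1 * e" by blast
  have "c1 * (q * N) = c1 * (c2 * e)" using assms(3) e by (simp add: algebra_simps)
  hence "q * N = c2 * e" using assms(1) by simp
  moreover have "e \<noteq> 0" using e assms(4) by auto
  ultimately show ?thesis using e that by blast
qed

text \<open>If  2K = c1 e  and  q N = c2 e,  then multiplying the
  circle equation of a point (x,y) by e^2 gives  e^2 c3 = (2K x - qN)^2 + (2K y - pN)^2;
  combining these identities for the two endpoints yields  e^2 c3 = D W.\<close>
lemma chord_centre_elimination:
  fixes x1 y1 x2 y2 q p c1 c2 c3 e :: int
  defines "K \<equiv> q * (x1 - x2) + p * (y1 - y2)" and "N \<equiv> x1^2 + y1^2 - x2^2 - y2^2"
  assumes q: "q \<noteq> 0"
    and E1: "(q * c1 * x1 - q * c2)^2 + (q * c1 * y1 - p * c2)^2 = q^2 * c3"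
    and E2: "(q * c1 * x2 - q * c2)^2 + (q * c1 * y2 - p * c2)^2 = q^2 * c3"
    and e1: "2 * K = c1 * e" and e2: "q * N = c2 * e"
  shows "e^2 * c3 = ((x1 - x2)^2 + (y1 - y2)^2) *
           ((q * (y1 + y2) - p * (x1 + x2))^2 + (q * (x1 - x2) + p * (y1 - y2))^2)"
proof -
  have F1: "e^2 * c3 = (2 * K * x1 - q * N)^2 + (2 * K * y1 - p * N)^2"
  proof -
    have "q^2 * (e^2 * c3) = q^2 * ((2 * K * x1 - q * N)^2 + (2 * K * y1 - p * N)^2)"
      using E1 e1 e2 by algebra
    thus ?thesis using q by simp
  qed
  have F2: "e^2 * c3 = (2 * K * x2 - q * N)^2 + (2 * K * y2 - p * N)^2"
  proof -
    have "q^2 * (e^2 * c3) = q^2 * ((2 * K * x2 - q * N)^2 + (2 * K * y2 - p * N)^2)"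
      using E2 e1 e2 by algebra
    thus ?thesis using q by simp
  qed
  show ?thesis using F1 F2 unfolding K_def N_def by algebra
qed

text \<open>A nondegenerate chord (K nonzero) between two lattice points of the circle bounds
  c1, c2 and c3 in terms of the two points, since the cofactor e satisfies |e| >= 1.\<close>
lemma chord_bounds:
  fixes x1 y1 x2 y2 q p c1 c2 c3 :: int
  assumes q: "q > 0" and c1: "c1 \<noteq> 0" and cop: "coprime c1 c2"
    and E1: "(q * c1 * x1 - q * c2)^2 + (q * c1 * y1 - p * c2)^2 = q^2 * c3"
    and E2: "(q * c1 * x2 - q * c2)^2 + (q * c1 * y2 - p * c2)^2 = q^2 * c3"
    and K: "q * (x1 - x2) + p * (y1 - y2) \<noteq> 0"
  shows "\<bar>c1\<bar> \<le> 2 * \<bar>q * (x1 - x2) + p * (y1 - y2)\<bar>"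
    and "\<bar>c2\<bar> \<le> q * \<bar>x1^2 + y1^2 - x2^2 - y2^2\<bar>"
    and "c3 \<le> ((x1 - x2)^2 + (y1 - y2)^2) *
              ((q * (y1 + y2) - p * (x1 + x2))^2 + (q * (x1 - x2) + p * (y1 - y2))^2)"
proof -
  define K where "K = q * (x1 - x2) + p * (y1 - y2)"
  define N where "N = x1^2 + y1^2 - x2^2 - y2^2"
  have "q * c1 * N = 2 * c2 * K"
    using chord_relation[OF _ c1 E1 E2] q unfolding K_def N_def by simp
  then obtain e where e0: "e \<noteq> 0" and e1: "2 * K = c1 * e" and e2: "q * N = c2 * e"
    using chord_cofactor[OF c1 cop] K unfolding K_def by metis
  have e_ge: "1 \<le> \<bar>e\<bar>" using e0 by linarith
  have "\<bar>c1\<bar> \<le> \<bar>c1\<bar> * \<bar>e\<bar>" using e_ge by (simp add: mult_le_cancel_left1)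
  also have "\<dots> = 2 * \<bar>K\<bar>" using e1 by (simp add: abs_mult[symmetric])
  finally show "\<bar>c1\<bar> \<le> 2 * \<bar>q * (x1 - x2) + p * (y1 - y2)\<bar>" unfolding K_def .
  have "\<bar>c2\<bar> \<le> \<bar>c2\<bar> * \<bar>e\<bar>" using e_ge by (simp add: mult_le_cancel_left1)
  also have "\<dots> = q * \<bar>N\<bar>" using e2 q by (metis abs_mult abs_of_pos)
  finally show "\<bar>c2\<bar> \<le> q * \<bar>x1^2 + y1^2 - x2^2 - y2^2\<bar>" unfolding N_def .
  have DW: "e^2 * c3 = ((x1 - x2)^2 + (y1 - y2)^2) *
              ((q * (y1 + y2) - p * (x1 + x2))^2 + (q * (x1 - x2) + p * (y1 - y2))^2)"
    using chord_centre_elimination[OF _ E1 E2] q e1 e2 unfolding K_def N_def by simp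
  have "0 \<le> q^2 * c3" using E1[symmetric] by simp
  hence "0 \<le> c3" using q by (simp add: zero_le_mult_iff)
  moreover have "1 \<le> e^2" using e_ge by (metis abs_le_square_iff abs_one one_power2)
  ultimately have "c3 \<le> e^2 * c3" by (simp add: mult_le_cancel_right1)
  thus "c3 \<le> ((x1 - x2)^2 + (y1 - y2)^2) *
              ((q * (y1 + y2) - p * (x1 + x2))^2 + (q * (x1 - x2) + p * (y1 - y2))^2)"
    using DW by simp
qed

subsection \<open>Existence of a nondegenerate chord\<close>

text \<open>Collinearity makes P3 - P1 = (s/a)(P2 - P1) with
  a = |P2 - P1|^2 and s = (P2 - P1).(P3 - P1); equal norms then force s(s - a) = 0,
  i.e. P3 = P1 or P3 = P2.\<close>
lemma three_collinear_equidistant_points: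
  fixes x1 y1 x2 y2 x3 y3 q p :: int
  assumes q: "q \<noteq> 0"
    and line2: "q * (x2 - x1) + p * (y2 - y1) = 0" and line3: "q * (x3 - x1) + p * (y3 - y1) = 0"
    and norm2: "x2^2 + y2^2 = x1^2 + y1^2" and norm3: "x3^2 + y3^2 = x1^2 + y1^2"
    and "(x2, y2) \<noteq> (x1, y1)" and "(x3, y3) \<noteq> (x1, y1)" and "(x3, y3) \<noteq> (x2, y2)"
  shows False
proof -
  have "q * ((x2 - x1) * (y3 - y1) - (y2 - y1) * (x3 - x1)) = 0" using line2 line3 by algebra
  hence collinear: "(x2 - x1) * (y3 - y1) = (y2 - y1) * (x3 - x1)" using q by simp
  define a where "a = (x2 - x1)^2 + (y2 - y1)^2"
  define s where "s = (x2 - x1) * (x3 - x1) + (y2 - y1) * (y3 - y1)"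
  have cx: "a * (x3 - x1) = s * (x2 - x1)" using collinear unfolding a_def s_def by algebra
  have cy: "a * (y3 - y1) = s * (y2 - y1)" using collinear unfolding a_def s_def by algebra
  have "a * s * (s - a) = 0" using norm2 norm3 cx cy unfolding a_def s_def by algebra
  moreover have "a \<noteq> 0"
    using \<open>(x2, y2) \<noteq> (x1, y1)\<close> sum_power2_eq_zero_iff[of "x2 - x1" "y2 - y1"]
    unfolding a_def by auto
  moreover have "s \<noteq> 0"
    using cx cy \<open>a \<noteq> 0\<close> \<open>(x3, y3) \<noteq> (x1, y1)\<close> by auto
  moreover have "s \<noteq> a"
  proof
    assume "s = a"
    hence "a * (x3 - x2) = 0" "a * (y3 - y2) = 0" using cx cy by (simp_all add: algebra_simps)
    thus False using \<open>(x3, y3) \<noteq> (x2, y2)\<close> \<open>a \<noteq> 0\<close> by simp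
  qed
  ultimately show False by simp
qed

text \<open>Among at least three lattice points of the circle there is a chord with K nonzero:
  if every chord from a point P1 had K = 0, the chord relation would put all points at the
  distance of P1 from the origin, contradicting the previous lemma.\<close>
lemma exists_nondegenerate_chord:
  fixes q p c1 c2 c3 :: int and A :: "(int \<times> int) set"
  assumes q: "q \<noteq> 0" and c1: "c1 \<noteq> 0" and "3 \<le> card A"
    and on_circle: "\<And>x y. (x, y) \<in> A \<Longrightarrow> (q * c1 * x - q * c2)^2 + (q * c1 * y - p * c2)^2 = q^2 * c3"
  shows "\<exists>(x1, y1) \<in> A. \<exists>(x2, y2) \<in> A. q * (x1 - x2) + p * (y1 - y2) \<noteq> 0"
proof (rule ccontr)
  assume degenerate: "\<not> ?thesis"
  obtain T where "T \<subseteq> A" "card T = 3" using obtain_subset_with_card_n[OF assms(3)] by blast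
  then obtain x1 y1 x2 y2 x3 y3 where pts: "(x1, y1) \<in> A" "(x2, y2) \<in> A" "(x3, y3) \<in> A"
    and distinct: "(x2, y2) \<noteq> (x1, y1)" "(x3, y3) \<noteq> (x1, y1)" "(x3, y3) \<noteq> (x2, y2)"
    by (auto simp: card_3_iff)
  have line: "q * (x - x1) + p * (y - y1) = 0" if "(x, y) \<in> A" for x y
    using degenerate that pts(1) by auto
  have norm: "x^2 + y^2 = x1^2 + y1^2" if "(x, y) \<in> A" for x y
  proof -
    have "q * c1 * (x^2 + y^2 - x1^2 - y1^2) = 0"
      using chord_relation[OF q c1 on_circle[OF that] on_circle[OF pts(1)]] line[OF that] by simp
    thus ?thesis using q c1 by simp
  qed
  show False
    using three_collinear_equidistant_points[OF q line[OF pts(2)] line[OF pts(3)]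
        norm[OF pts(2)] norm[OF pts(3)] distinct] .
qed

text \<open>The following three lemmas bound the right-hand sides of chord_bounds by the
  claimed estimates, for two lattice points of the box [-H,H]^2.  Writing p = q m, each
  quantity is q (or q^2) times an expression in m and the real coordinates.\<close>
lemma chord_K_box_bound:
  fixes x1 y1 x2 y2 p q :: int and H m :: real
  assumes q: "q > 0" and m: "m = of_int p / of_int q"
    and box: "\<bar>real_of_int x1\<bar> \<le> H" "\<bar>real_of_int x2\<bar> \<le> H"
      "\<bar>real_of_int y1\<bar> \<le> H" "\<bar>real_of_int y2\<bar> \<le> H"
  shows "real_of_int (2 * \<bar>q * (x1 - x2) + p * (y1 - y2)\<bar>) \<le> 4 * of_int q * (1 + \<bar>m\<bar>) * H"
proof -
  have p: "real_of_int p = of_int q * m" using q m by simp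
  have "\<bar>m * (real_of_int y1 - of_int y2)\<bar> \<le> \<bar>m\<bar> * (2 * H)"
    unfolding abs_mult using box(3,4) by (intro mult_left_mono) auto
  hence "\<bar>(real_of_int x1 - of_int x2) + m * (of_int y1 - of_int y2)\<bar> \<le> 2 * H * (1 + \<bar>m\<bar>)"
    using box(1,2) by (simp add: algebra_simps)
  hence "of_int q * \<bar>(real_of_int x1 - of_int x2) + m * (of_int y1 - of_int y2)\<bar>
      \<le> of_int q * (2 * H * (1 + \<bar>m\<bar>))"
    using q by (intro mult_left_mono) auto
  moreover have "real_of_int (q * (x1 - x2) + p * (y1 - y2))
      = of_int q * ((real_of_int x1 - of_int x2) + m * (of_int y1 - of_int y2))"
    by (simp add: p algebra_simps)
  hence "real_of_int \<bar>q * (x1 - x2) + p * (y1 - y2)\<bar>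
      = of_int q * \<bar>(real_of_int x1 - of_int x2) + m * (of_int y1 - of_int y2)\<bar>"
    using q by (simp add: abs_mult)
  ultimately show ?thesis by (simp add: algebra_simps)
qed

lemma chord_N_box_bound:
  fixes x1 y1 x2 y2 q :: int and H :: real
  assumes q: "q > 0"
    and box: "\<bar>real_of_int x1\<bar> \<le> H" "\<bar>real_of_int x2\<bar> \<le> H"
      "\<bar>real_of_int y1\<bar> \<le> H" "\<bar>real_of_int y2\<bar> \<le> H"
  shows "real_of_int (q * \<bar>x1^2 + y1^2 - x2^2 - y2^2\<bar>) \<le> 2 * of_int q * H^2"
proof -
  have sq: "(real_of_int t)^2 \<le> H^2" if "\<bar>real_of_int t\<bar> \<le> H" for t
    using that by (simp add: power2_le_iff_abs_le order_trans[OF abs_ge_zero that])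
  have "real_of_int \<bar>x1^2 + y1^2 - x2^2 - y2^2\<bar>
      = \<bar>(real_of_int x1)^2 + (real_of_int y1)^2 - (real_of_int x2)^2 - (real_of_int y2)^2\<bar>"
    by simp
  also have "\<dots> \<le> 2 * H^2"
    using sq[OF box(1)] sq[OF box(2)] sq[OF box(3)] sq[OF box(4)]
      zero_le_power2[of "real_of_int x1"] zero_le_power2[of "real_of_int x2"]
      zero_le_power2[of "real_of_int y1"] zero_le_power2[of "real_of_int y2"]
    by linarith
  finally have "real_of_int \<bar>x1^2 + y1^2 - x2^2 - y2^2\<bar> \<le> 2 * H^2" .
  hence "of_int q * real_of_int \<bar>x1^2 + y1^2 - x2^2 - y2^2\<bar> \<le> of_int q * (2 * H^2)"
    using q by (intro mult_left_mono) auto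
  thus ?thesis by simp
qed

lemma chord_DW_box_bound:
  fixes x1 y1 x2 y2 p q :: int and H m :: real
  assumes q: "q > 0" and m: "m = of_int p / of_int q"
    and box: "\<bar>real_of_int x1\<bar> \<le> H" "\<bar>real_of_int x2\<bar> \<le> H"
      "\<bar>real_of_int y1\<bar> \<le> H" "\<bar>real_of_int y2\<bar> \<le> H"
  shows "real_of_int (((x1 - x2)^2 + (y1 - y2)^2) *
           ((q * (y1 + y2) - p * (x1 + x2))^2 + (q * (x1 - x2) + p * (y1 - y2))^2))
         \<le> 36 * (of_int q)^2 * (1 + \<bar>m\<bar>)^2 * H^4"
proof -
  define X1 X2 Y1 Y2 where "X1 = real_of_int x1" and "X2 = real_of_int x2"
    and "Y1 = real_of_int y1" and "Y2 = real_of_int y2"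
  have p: "real_of_int p = of_int q * m" using q m by simp
  have "real_of_int (((x1 - x2)^2 + (y1 - y2)^2) *
           ((q * (y1 + y2) - p * (x1 + x2))^2 + (q * (x1 - x2) + p * (y1 - y2))^2))
      = (of_int q)^2 * (((X1 - X2)^2 + (Y1 - Y2)^2) *
           (((Y1 + Y2) - m * (X1 + X2))^2 + ((X1 - X2) + m * (Y1 - Y2))^2))"
    unfolding X1_def X2_def Y1_def Y2_def
    by (simp only: of_int_mult of_int_add of_int_diff of_int_power p) algebra
  also have "\<dots> \<le> (of_int q)^2 * (36 * (1 + \<bar>m\<bar>)^2 * H^4)"
    using chord_weighted_bound[OF box[folded X1_def X2_def Y1_def Y2_def], of m]
    by (intro mult_left_mono) auto
  finally show ?thesis by (simp add: algebra_simps)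
qed

theorem proposition1:
  fixes H :: real and p q c1 c2 c3 :: int and m :: real
  assumes "H \<ge> 1"
    and "q > 0"
    and "m = of_int p / of_int q"
    and "c1 \<noteq> 0" and "c3 \<ge> 0"
    and "coprime_pair c1 c2"
    and "card {(x, y). \<bar>real_of_int x\<bar> \<le> H \<and> \<bar>real_of_int y\<bar> \<le> H \<and>
              (of_int c1 * real_of_int x - of_int c2)\<^sup>2 + (of_int c1 * real_of_int y - m * of_int c2)\<^sup>2
                = real_of_int c3} \<ge> 3"
  shows "real_of_int \<bar>c1\<bar> \<le> 4 * of_int q * (1 + \<bar>m\<bar>) * H
       \<and> real_of_int \<bar>c2\<bar> \<le> 2 * of_int q * H\<^sup>2
       \<and> real_of_int c3 \<le> 36 * (of_int q)\<^sup>2 * (1 + \<bar>m\<bar>)\<^sup>2 * H ^ 4"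
proof -
  define S where "S = {(x, y). \<bar>real_of_int x\<bar> \<le> H \<and> \<bar>real_of_int y\<bar> \<le> H \<and>
              (of_int c1 * real_of_int x - of_int c2)\<^sup>2 + (of_int c1 * real_of_int y - m * of_int c2)\<^sup>2
                = real_of_int c3}"
  have cop: "coprime c1 c2" using assms(4,6) unfolding coprime_pair_def by auto
  have on_circle: "(q * c1 * x - q * c2)^2 + (q * c1 * y - p * c2)^2 = q^2 * c3"
    if "(x, y) \<in> S" for x y
    using that circle_equation_int[OF assms(2,3)] unfolding S_def by auto
  have "q \<noteq> 0" and "3 \<le> card S" using assms(2,7) unfolding S_def by simp_all
  then obtain x1 y1 x2 y2 where in_S: "(x1, y1) \<in> S" "(x2, y2) \<in> S"
    and K: "q * (x1 - x2) + p * (y1 - y2) \<noteq> 0"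
    using exists_nondegenerate_chord[OF _ assms(4) _ on_circle] by blast
  have box: "\<bar>real_of_int x1\<bar> \<le> H" "\<bar>real_of_int x2\<bar> \<le> H"
    "\<bar>real_of_int y1\<bar> \<le> H" "\<bar>real_of_int y2\<bar> \<le> H"
    using in_S unfolding S_def by auto
  note int_bounds = chord_bounds[OF assms(2,4) cop on_circle[OF in_S(1)] on_circle[OF in_S(2)] K]
  have "real_of_int \<bar>c1\<bar> \<le> 4 * of_int q * (1 + \<bar>m\<bar>) * H"
    using int_bounds(1) chord_K_box_bound[OF assms(2,3) box] by (meson of_int_le_iff order_trans)
  moreover have "real_of_int \<bar>c2\<bar> \<le> 2 * of_int q * H\<^sup>2"
    using int_bounds(2) chord_N_box_bound[OF assms(2) box] by (meson of_int_le_iff order_trans)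
  moreover have "real_of_int c3 \<le> 36 * (of_int q)\<^sup>2 * (1 + \<bar>m\<bar>)\<^sup>2 * H ^ 4"
    using int_bounds(3) chord_DW_box_bound[OF assms(2,3) box] by (meson of_int_le_iff order_trans)
  ultimately show ?thesis by blast
qed

end
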